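(* Consider a Markov decision process with finite state set $S$, finite action set $A$, transition kernel $T(s'\mid s,a)$, initial state distribution $p_0$ and discount factor $\gamma\in[0,1)$. Let $\beta>0$, $\alpha\in[0,1)$, let $\mu^U(a\mid s)$ be a policy with $\mu^U(a\mid s)>0$ for all $(s,a)$, let $d^U$ be a probability distribution on $S\times A$, let $\Psi:S\times A\to\mathbb{R}$, and set $\delta(s,a)=\exp\big(\frac{\Psi(s,a)}{1-\alpha}\big)$. For $Q:S\times A\to\mathbb{R}$ and a policy $\pi$ define $$V_Q^\pi(s)=\mathbb{E}_{a\sim\pi(\cdot\mid s)}\Big[Q(s,a)-\beta\log\frac{\pi(a\mid s)}{\mu^U(a\mid s)}\Big],\qquad \mathcal{T}^\pi[Q](s,a)=Q(s,a)-\gamma\,\mathbb{E}_{s'\sim T(\cdot\mid s,a)}\big[V_Q^\pi(s')\big],$$ $$\widetilde{L}(Q,\pi)=(1-\gamma)\,\mathbb{E}_{s\sim p_0}\big[V_Q^\pi(s)\big]-\mathbb{E}_{(s,a)\sim d^U}\big[\delta(s,a)\,\mathcal{T}^\pi[Q](s,a)\big]+(1-\alpha)\,\mathbb{E}_{(s,a)\sim d^U}\big[\delta(s,a)\big].$$ Also define $V_Q(s)=\beta\log\big(\sum_{a}\mu^U(a\mid s)\exp(Q(s,a)/\beta)\big)$, $\mathcal{T}[Q](s,a)=Q(s,a)-\gamma\,\mathbb{E}_{s'\sim T(\cdot\mid s,a)}[V_Q(s')]$, and $$\widetilde{L}(Q)=(1-\gamma)\,\mathbb{E}_{s\sim p_0}\big[V_Q(s)\big]-\mathbb{E}_{(s,a)\sim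 d^U}\big[\delta(s,a)\,\mathcal{T}[Q](s,a)\big].$$ Then: (i) $\widetilde{L}(Q,\pi)$ is linear in $Q$ and concave in $\pi$, and consequently $\max_\pi\min_Q\widetilde{L}(Q,\pi)=\min_Q\max_\pi\widetilde{L}(Q,\pi)$. (ii) The min–max problem $\min_Q\max_\pi\widetilde{L}(Q,\pi)$ reduces to the non-adversarial problem $\min_Q\widetilde{L}(Q)$ (for every $Q$, $\max_\pi\widetilde{L}(Q,\pi)$ equals $\widetilde{L}(Q)$ plus the $Q$-independent constant $(1-\alpha)\mathbb{E}_{(s,a)\sim d^U}[\delta(s,a)]$), and $\widetilde{L}(Q)$ is convex in $Q$.
   Context: Policies $\pi$ range over all conditional distributions $\pi(\cdot\mid s)$ on $A$, $s\in S$. In the paper $\mu^U$ is the behavior policy of the union dataset, $d^U$ its state-action distribution, and $\Psi(s,a)=\log\frac{d^G(s,a)}{d^U(s,a)}-\alpha\log\frac{d^B(s,a)}{d^U(s,a)}$. *)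

theory Defs
  imports "HOL-Analysis.Analysis"
begin

definition is_policy :: "('s::finite \<Rightarrow> 'a::finite \<Rightarrow> real) \<Rightarrow> bool" where
  "is_policy \<pi> \<longleftrightarrow> (\<forall>s a. 0 \<le> \<pi> s a) \<and> (\<forall>s. (\<Sum>a\<in>UNIV. \<pi> s a) = 1)"

definition policies :: "('s::finite \<Rightarrow> 'a::finite \<Rightarrow> real) set" where
  "policies = {\<pi>. is_policy \<pi>}"

definition delta_w :: "real \<Rightarrow> ('s \<Rightarrow> 'a \<Rightarrow> real) \<Rightarrow> 's \<Rightarrow> 'a \<Rightarrow> real" where
  "delta_w \<alpha> \<Psi> s a = exp (\<Psi> s a / (1 - \<alpha>))"

definition V_pi :: "real \<Rightarrow> ('s \<Rightarrow> 'a::finite \<Rightarrow> real) \<Rightarrow> ('s \<Rightarrow> 'a \<Rightarrow> real)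
                     \<Rightarrow> ('s \<Rightarrow> 'a \<Rightarrow> real) \<Rightarrow> 's \<Rightarrow> real" where
  "V_pi \<beta> \<mu> Q \<pi> s = (\<Sum>a\<in>UNIV. \<pi> s a * (Q s a - \<beta> * ln (\<pi> s a / \<mu> s a)))"

definition Bell_pi :: "real \<Rightarrow> ('s::finite \<Rightarrow> 'a \<Rightarrow> 's \<Rightarrow> real) \<Rightarrow> real \<Rightarrow> ('s \<Rightarrow> 'a::finite \<Rightarrow> real)
                     \<Rightarrow> ('s \<Rightarrow> 'a \<Rightarrow> real) \<Rightarrow> ('s \<Rightarrow> 'a \<Rightarrow> real) \<Rightarrow> 's \<Rightarrow> 'a \<Rightarrow> real" where
  "Bell_pi \<gamma> T \<beta> \<mu> Q \<pi> s a = Q s a - \<gamma> * (\<Sum>s'\<in>UNIV. T s a s' * V_pi \<beta> \<mu> Q \<pi> s')"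

definition L_minmax ::
  "real \<Rightarrow> ('s::finite \<Rightarrow> 'a::finite \<Rightarrow> 's \<Rightarrow> real) \<Rightarrow> ('s \<Rightarrow> real) \<Rightarrow> real \<Rightarrow> real
   \<Rightarrow> ('s \<Rightarrow> 'a \<Rightarrow> real) \<Rightarrow> ('s \<Rightarrow> 'a \<Rightarrow> real) \<Rightarrow> ('s \<Rightarrow> 'a \<Rightarrow> real)
   \<Rightarrow> ('s \<Rightarrow> 'a \<Rightarrow> real) \<Rightarrow> ('s \<Rightarrow> 'a \<Rightarrow> real) \<Rightarrow> real" where
  "L_minmax \<gamma> T p0 \<beta> \<alpha> \<mu> dU \<Psi> Q \<pi> =
     (1 - \<gamma>) * (\<Sum>s\<in>UNIV. p0 s * V_pi \<beta> \<mu> Q \<pi> s)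
     - (\<Sum>s\<in>UNIV. \<Sum>a\<in>UNIV. dU s a * (delta_w \<alpha> \<Psi> s a * Bell_pi \<gamma> T \<beta> \<mu> Q \<pi> s a))
     + (1 - \<alpha>) * (\<Sum>s\<in>UNIV. \<Sum>a\<in>UNIV. dU s a * delta_w \<alpha> \<Psi> s a)"

definition V_soft :: "real \<Rightarrow> ('s \<Rightarrow> 'a::finite \<Rightarrow> real) \<Rightarrow> ('s \<Rightarrow> 'a \<Rightarrow> real) \<Rightarrow> 's \<Rightarrow> real" where
  "V_soft \<beta> \<mu> Q s = \<beta> * ln (\<Sum>a\<in>UNIV. \<mu> s a * exp (Q s a / \<beta>))"

definition Bell_soft :: "real \<Rightarrow> ('s::finite \<Rightarrow> 'a \<Rightarrow> 's \<Rightarrow> real) \<Rightarrow> real \<Rightarrow> ('s \<Rightarrow> 'a::finite \<Rightarrow> real)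
                     \<Rightarrow> ('s \<Rightarrow> 'a \<Rightarrow> real) \<Rightarrow> 's \<Rightarrow> 'a \<Rightarrow> real" where
  "Bell_soft \<gamma> T \<beta> \<mu> Q s a = Q s a - \<gamma> * (\<Sum>s'\<in>UNIV. T s a s' * V_soft \<beta> \<mu> Q s')"

definition L_single ::
  "real \<Rightarrow> ('s::finite \<Rightarrow> 'a::finite \<Rightarrow> 's \<Rightarrow> real) \<Rightarrow> ('s \<Rightarrow> real) \<Rightarrow> real \<Rightarrow> real
   \<Rightarrow> ('s \<Rightarrow> 'a \<Rightarrow> real) \<Rightarrow> ('s \<Rightarrow> 'a \<Rightarrow> real) \<Rightarrow> ('s \<Rightarrow> 'a \<Rightarrow> real)
   \<Rightarrow> ('s \<Rightarrow> 'a \<Rightarrow> real) \<Rightarrow> real" where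
  "L_single \<gamma> T p0 \<beta> \<alpha> \<mu> dU \<Psi> Q =
     (1 - \<gamma>) * (\<Sum>s\<in>UNIV. p0 s * V_soft \<beta> \<mu> Q s)
     - (\<Sum>s\<in>UNIV. \<Sum>a\<in>UNIV. dU s a * (delta_w \<alpha> \<Psi> s a * Bell_soft \<gamma> T \<beta> \<mu> Q s a))"

end

theory Submission
  imports Defs
begin

text \<open>Both objectives have the form (1 - \<gamma>) E_p0[V] - E_\<rho>[Q - \<gamma> E_T V] with \<rho> = d^U \<delta>,
  which regroups as sum_s w(s) V(s) - sum \<rho> Q for the nonnegative discounted inflow
  w(s') = (1 - \<gamma>) p0(s') + \<gamma> sum_(s,a) \<rho>(s,a) T(s'|s,a). Hence linearity in Q is immediate and
  concavity in \<pi> is concavity of entropy, while the Gibbs variational principle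
  max_\<pi> V_Q^\<pi> = V_Q, attained at \<pi> proportional to \<mu> exp(Q/\<beta>), gives (ii); V_Q is convex as
  a maximum of functions affine in Q.
  For the minimax equality: if \<rho> violates the flow constraint sum_a \<rho>(s,a) = w(s) at some state,
  action-independent Q drive min_Q max_\<pi> to -\<infinity>. Otherwise the conditional policy \<rho>/w makes
  L(Q, \<rho>/w) independent of Q, and the log-ratios Q = \<beta> log((\<rho>/w + \<epsilon>)/\<mu>) show that this
  constant is also min_Q max_\<pi>.\<close>

lemma SUP_INF_le_INF_SUP:
  fixes f :: "'a \<Rightarrow> 'b \<Rightarrow> 'c::complete_lattice"
  shows "(SUP x\<in>A. INF y\<in>B. f x y) \<le> (INF y\<in>B. SUP x\<in>A. f x y)"
  by (intro SUP_least INF_greatest) (meson INF_lower SUP_upper order_trans)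

lemma mult_ln_div_ge_tangent:
  fixes x y m :: real
  assumes "0 \<le> x" "0 < y" "0 < m"
  shows "x * ln (y / m) + x - y \<le> x * ln (x / m)"
proof (cases "x = 0")
  case True
  then show ?thesis using assms by simp
next
  case False
  with assms have x: "0 < x" by simp
  have "ln (y / m) = ln (y / x) + ln (x / m)"
    using x assms by (simp add: ln_div)
  also have "\<dots> \<le> y / x - 1 + ln (x / m)"
    using x assms by (simp add: ln_le_minus_one)
  finally have "x * ln (y / m) \<le> x * (y / x - 1 + ln (x / m))"
    using x by (simp add: mult_left_mono)
  then show ?thesis using x by (simp add: algebra_simps)
qed

lemma mult_ln_div_convex:
  fixes t x1 x2 m :: real
  assumes t: "0 \<le> t" "t \<le> 1" and x: "0 \<le> x1" "0 \<le> x2" and m: "0 < m"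
  shows "(t * x1 + (1 - t) * x2) * ln ((t * x1 + (1 - t) * x2) / m)
       \<le> t * (x1 * ln (x1 / m)) + (1 - t) * (x2 * ln (x2 / m))"
proof -
  define y where "y = t * x1 + (1 - t) * x2"
  have "0 \<le> y" using t x by (simp add: y_def)
  show ?thesis
  proof (cases "y = 0")
    case True
    then have "t * x1 = 0" "(1 - t) * x2 = 0"
      using t x unfolding y_def by (smt (verit) mult_nonneg_nonneg)+
    then show ?thesis using True by (auto simp: y_def)
  next
    case False
    with \<open>0 \<le> y\<close> have y: "0 < y" by simp
    \<comment> \<open>the tangent line of \<open>x \<mapsto> x ln (x/m)\<close> at \<open>y\<close> lies below it and averages to its value at \<open>y\<close>\<close>
    have "t * (x1 * ln (y / m) + x1 - y) \<le> t * (x1 * ln (x1 / m))"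
      "(1 - t) * (x2 * ln (y / m) + x2 - y) \<le> (1 - t) * (x2 * ln (x2 / m))"
      using mult_ln_div_ge_tangent[OF x(1) y m] mult_ln_div_ge_tangent[OF x(2) y m] t
      by (auto intro: mult_left_mono)
    moreover have "y * ln (y / m) = t * (x1 * ln (y / m) + x1 - y) + (1 - t) * (x2 * ln (y / m) + x2 - y)"
      unfolding y_def by (simp add: algebra_simps)
    ultimately show ?thesis unfolding y_def by linarith
  qed
qed

lemma V_pi_affine_Q:
  "V_pi \<beta> \<mu> (\<lambda>s a. t * Q1 s a + (1 - t) * Q2 s a) \<pi> s
   = t * V_pi \<beta> \<mu> Q1 \<pi> s + (1 - t) * V_pi \<beta> \<mu> Q2 \<pi> s"
  unfolding V_pi_def by (simp add: algebra_simps sum.distrib sum_distrib_left sum_subtractf)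

lemma V_pi_eq_expectation_plus_V_pi_zero:
  "V_pi \<beta> \<mu> Q \<pi> s = (\<Sum>a\<in>UNIV. \<pi> s a * Q s a) + V_pi \<beta> \<mu> (\<lambda>_ _. 0) \<pi> s"
  unfolding V_pi_def by (simp add: algebra_simps sum.distrib sum_subtractf sum_negf)

lemma V_pi_concave_policy:
  fixes \<pi>1 \<pi>2 :: "'s \<Rightarrow> 'a::finite \<Rightarrow> real"
  assumes t: "0 \<le> t" "t \<le> 1" and "\<And>a. 0 \<le> \<pi>1 s a" "\<And>a. 0 \<le> \<pi>2 s a"
    and "\<And>a. 0 < \<mu> s a" "0 \<le> \<beta>"
  shows "t * V_pi \<beta> \<mu> Q \<pi>1 s + (1 - t) * V_pi \<beta> \<mu> Q \<pi>2 s
     \<le> V_pi \<beta> \<mu> Q (\<lambda>s a. t * \<pi>1 s a + (1 - t) * \<pi>2 s a) s"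
proof -
  have pointwise: "t * (\<pi>1 s a * (Q s a - \<beta> * ln (\<pi>1 s a / \<mu> s a)))
      + (1 - t) * (\<pi>2 s a * (Q s a - \<beta> * ln (\<pi>2 s a / \<mu> s a)))
      \<le> (t * \<pi>1 s a + (1 - t) * \<pi>2 s a) * (Q s a - \<beta> * ln ((t * \<pi>1 s a + (1 - t) * \<pi>2 s a) / \<mu> s a))"
    for a
  proof -
    have "\<beta> * ((t * \<pi>1 s a + (1 - t) * \<pi>2 s a) * ln ((t * \<pi>1 s a + (1 - t) * \<pi>2 s a) / \<mu> s a))
       \<le> \<beta> * (t * (\<pi>1 s a * ln (\<pi>1 s a / \<mu> s a)) + (1 - t) * (\<pi>2 s a * ln (\<pi>2 s a / \<mu> s a)))"
      using assms by (intro mult_left_mono mult_ln_div_convex) auto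
    then show ?thesis by (simp add: algebra_simps)
  qed
  show ?thesis
    unfolding V_pi_def sum_distrib_left sum.distrib[symmetric] by (intro sum_mono pointwise)
qed

definition gibbs_policy :: "real \<Rightarrow> ('s \<Rightarrow> 'a::finite \<Rightarrow> real) \<Rightarrow> ('s \<Rightarrow> 'a \<Rightarrow> real) \<Rightarrow> 's \<Rightarrow> 'a \<Rightarrow> real"
  where "gibbs_policy \<beta> \<mu> Q s a = \<mu> s a * exp (Q s a / \<beta>) / (\<Sum>b\<in>UNIV. \<mu> s b * exp (Q s b / \<beta>))"

lemma partition_function_pos:
  fixes \<mu> :: "'s \<Rightarrow> 'a::finite \<Rightarrow> real"
  assumes "\<And>a. 0 < \<mu> s a"
  shows "0 < (\<Sum>b\<in>UNIV. \<mu> s b * exp (Q s b / \<beta>))"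
  using assms by (intro sum_pos) auto

lemma is_policy_gibbs_policy:
  fixes \<mu> :: "'s::finite \<Rightarrow> 'a::finite \<Rightarrow> real"
  assumes "\<And>s a. 0 < \<mu> s a"
  shows "is_policy (gibbs_policy \<beta> \<mu> Q)"
proof -
  have Z: "0 < (\<Sum>b\<in>UNIV. \<mu> s b * exp (Q s b / \<beta>))" for s
    using assms by (rule partition_function_pos)
  have "0 \<le> gibbs_policy \<beta> \<mu> Q s a" for s a
    using Z[of s] assms[of s a] by (simp add: gibbs_policy_def less_imp_le)
  moreover have "(\<Sum>a\<in>UNIV. gibbs_policy \<beta> \<mu> Q s a) = 1" for s
    using Z[of s] by (simp add: gibbs_policy_def sum_divide_distrib[symmetric])
  ultimately show ?thesis unfolding is_policy_def by blast
qed

lemma V_pi_le_V_soft: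
  fixes \<mu> :: "'s \<Rightarrow> 'a::finite \<Rightarrow> real"
  assumes \<mu>: "\<And>a. 0 < \<mu> s a" and \<beta>: "0 < \<beta>"
    and \<pi>: "\<And>a. 0 \<le> \<pi> s a" "(\<Sum>a\<in>UNIV. \<pi> s a) = 1"
  shows "V_pi \<beta> \<mu> Q \<pi> s \<le> V_soft \<beta> \<mu> Q s"
proof -
  define Z where "Z = (\<Sum>b\<in>UNIV. \<mu> s b * exp (Q s b / \<beta>))"
  define g where "g a = \<mu> s a * exp (Q s a / \<beta>) / Z" for a
  have Z: "0 < Z" unfolding Z_def using \<mu> by (rule partition_function_pos)
  have "\<pi> s a * (Q s a - \<beta> * ln (\<pi> s a / \<mu> s a)) \<le> \<pi> s a * (\<beta> * ln Z) + \<beta> * (g a - \<pi> s a)" for a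
  proof -
    have "0 < g a" using Z \<mu>[of a] by (simp add: g_def)
    then have "\<pi> s a * ln (g a / \<mu> s a) + \<pi> s a - g a \<le> \<pi> s a * ln (\<pi> s a / \<mu> s a)"
      using \<pi>(1) \<mu> by (intro mult_ln_div_ge_tangent)
    moreover have "ln (g a / \<mu> s a) = Q s a / \<beta> - ln Z"
      using Z \<mu>[of a] by (simp add: g_def ln_div)
    ultimately have "\<pi> s a * (Q s a / \<beta> - ln Z) + \<pi> s a - g a \<le> \<pi> s a * ln (\<pi> s a / \<mu> s a)"
      by simp
    then have "\<beta> * (\<pi> s a * (Q s a / \<beta> - ln Z) + \<pi> s a - g a) \<le> \<beta> * (\<pi> s a * ln (\<pi> s a / \<mu> s a))"
      using \<beta> by (simp add: mult_left_mono)
    then show ?thesis using \<beta> by (simp add: algebra_simps)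
  qed
  then have "V_pi \<beta> \<mu> Q \<pi> s \<le> (\<Sum>a\<in>UNIV. \<pi> s a * (\<beta> * ln Z) + \<beta> * (g a - \<pi> s a))"
    unfolding V_pi_def by (rule sum_mono)
  also have "\<dots> = \<beta> * ln Z"
    using Z \<pi>(2) by (simp add: g_def Z_def sum.distrib sum_subtractf sum_divide_distrib[symmetric]
        sum_distrib_left[symmetric] sum_distrib_right[symmetric])
  finally show ?thesis unfolding V_soft_def Z_def .
qed

lemma V_pi_gibbs_policy:
  fixes \<mu> :: "'s \<Rightarrow> 'a::finite \<Rightarrow> real"
  assumes \<mu>: "\<And>a. 0 < \<mu> s a" and \<beta>: "0 < \<beta>"
  shows "V_pi \<beta> \<mu> Q (gibbs_policy \<beta> \<mu> Q) s = V_soft \<beta> \<mu> Q s"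
proof -
  define Z where "Z = (\<Sum>b\<in>UNIV. \<mu> s b * exp (Q s b / \<beta>))"
  have Z: "0 < Z" unfolding Z_def using \<mu> by (rule partition_function_pos)
  have "Q s a - \<beta> * ln (gibbs_policy \<beta> \<mu> Q s a / \<mu> s a) = \<beta> * ln Z" for a
    using Z \<mu>[of a] \<beta> by (simp add: gibbs_policy_def Z_def[symmetric] ln_div algebra_simps)
  moreover have "(\<Sum>a\<in>UNIV. gibbs_policy \<beta> \<mu> Q s a) = 1"
    using Z by (simp add: gibbs_policy_def sum_divide_distrib[symmetric] flip: Z_def)
  ultimately show ?thesis
    unfolding V_pi_def V_soft_def Z_def[symmetric] by (simp add: sum_distrib_right[symmetric])
qed

lemma V_soft_convex:
  fixes \<mu> :: "'s::finite \<Rightarrow> 'a::finite \<Rightarrow> real"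
  assumes t: "0 \<le> t" "t \<le> 1" and \<mu>: "\<And>s a. 0 < \<mu> s a" and \<beta>: "0 < \<beta>"
  shows "V_soft \<beta> \<mu> (\<lambda>s a. t * Q1 s a + (1 - t) * Q2 s a) s
     \<le> t * V_soft \<beta> \<mu> Q1 s + (1 - t) * V_soft \<beta> \<mu> Q2 s"
proof -
  define g where "g = gibbs_policy \<beta> \<mu> (\<lambda>s a. t * Q1 s a + (1 - t) * Q2 s a)"
  have g: "is_policy g" unfolding g_def using is_policy_gibbs_policy \<mu> by blast
  have "V_soft \<beta> \<mu> (\<lambda>s a. t * Q1 s a + (1 - t) * Q2 s a) s
     = V_pi \<beta> \<mu> (\<lambda>s a. t * Q1 s a + (1 - t) * Q2 s a) g s"
    unfolding g_def using \<mu> \<beta> by (rule V_pi_gibbs_policy[symmetric])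
  also have "\<dots> = t * V_pi \<beta> \<mu> Q1 g s + (1 - t) * V_pi \<beta> \<mu> Q2 g s"
    by (rule V_pi_affine_Q)
  also have "\<dots> \<le> t * V_soft \<beta> \<mu> Q1 s + (1 - t) * V_soft \<beta> \<mu> Q2 s"
  proof -
    have "V_pi \<beta> \<mu> Q1 g s \<le> V_soft \<beta> \<mu> Q1 s" "V_pi \<beta> \<mu> Q2 g s \<le> V_soft \<beta> \<mu> Q2 s"
      using g \<mu> \<beta> unfolding is_policy_def by (auto intro: V_pi_le_V_soft)
    then show ?thesis using t by (intro add_mono mult_left_mono) auto
  qed
  finally show ?thesis .
qed

lemma V_soft_action_independent:
  assumes "(\<Sum>a\<in>UNIV. \<mu> s a) = 1" "\<beta> \<noteq> 0"
  shows "V_soft \<beta> \<mu> (\<lambda>s a. g s) s = g s"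
  using assms by (simp add: V_soft_def sum_distrib_right[symmetric])

lemma V_soft_log_ratio_le:
  fixes \<mu> \<pi> :: "'s \<Rightarrow> 'a::finite \<Rightarrow> real" and \<beta> \<epsilon> :: real
  defines "Q \<equiv> \<lambda>s a. \<beta> * ln ((\<pi> s a + \<epsilon>) / \<mu> s a)"
  assumes \<mu>: "\<And>a. 0 < \<mu> s a" and \<beta>: "0 < \<beta>" and \<epsilon>: "0 < \<epsilon>"
    and \<pi>: "\<And>a. 0 \<le> \<pi> s a" "(\<Sum>a\<in>UNIV. \<pi> s a) = 1"
  shows "V_soft \<beta> \<mu> Q s \<le> V_pi \<beta> \<mu> Q \<pi> s + \<beta> * \<epsilon> * CARD('a)"
proof -
  have "\<mu> s a * exp (Q s a / \<beta>) = \<pi> s a + \<epsilon>" for a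
    using \<mu>[of a] \<beta> \<pi>(1)[of a] \<epsilon> by (simp add: Q_def)
  then have "V_soft \<beta> \<mu> Q s = \<beta> * ln (1 + \<epsilon> * CARD('a))"
    using \<pi>(2) by (simp add: V_soft_def sum.distrib mult.commute)
  also have "\<dots> \<le> \<beta> * (\<epsilon> * CARD('a))"
    using \<beta> \<epsilon> by (intro mult_left_mono ln_add_one_self_le_self) auto
  finally have "V_soft \<beta> \<mu> Q s \<le> \<beta> * \<epsilon> * CARD('a)" by simp
  moreover have "0 \<le> V_pi \<beta> \<mu> Q \<pi> s"
    unfolding V_pi_def
  proof (rule sum_nonneg)
    fix a
    have "\<beta> * ln (\<pi> s a / \<mu> s a) \<le> Q s a" if "0 < \<pi> s a"
      using that \<mu>[of a] \<beta> \<epsilon> by (simp add: Q_def divide_right_mono)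
    then show "0 \<le> \<pi> s a * (Q s a - \<beta> * ln (\<pi> s a / \<mu> s a))"
      using \<pi>(1)[of a] by (cases "\<pi> s a = 0") auto
  qed
  ultimately show ?thesis by simp
qed

lemma sum_convex_comb:
  fixes w f g :: "'b \<Rightarrow> real"
  shows "(\<Sum>x\<in>A. w x * (t * f x + (1 - t) * g x))
       = t * (\<Sum>x\<in>A. w x * f x) + (1 - t) * (\<Sum>x\<in>A. w x * g x)"
proof -
  have "(\<Sum>x\<in>A. w x * (t * f x + (1 - t) * g x)) = (\<Sum>x\<in>A. t * (w x * f x) + (1 - t) * (w x * g x))"
    by (intro sum.cong refl) (simp add: algebra_simps)
  then show ?thesis by (simp only: sum.distrib sum_distrib_left)
qed

lemma sum_sum_convex_comb:
  fixes w f g :: "'b \<Rightarrow> 'c \<Rightarrow> real"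
  shows "(\<Sum>x\<in>A. \<Sum>y\<in>B. w x y * (t * f x y + (1 - t) * g x y))
       = t * (\<Sum>x\<in>A. \<Sum>y\<in>B. w x y * f x y) + (1 - t) * (\<Sum>x\<in>A. \<Sum>y\<in>B. w x y * g x y)"
  by (simp add: sum_convex_comb sum.distrib sum_distrib_left)

definition discounted_inflow ::
  "real \<Rightarrow> ('s::finite \<Rightarrow> 'a::finite \<Rightarrow> 's \<Rightarrow> real) \<Rightarrow> ('s \<Rightarrow> real) \<Rightarrow> ('s \<Rightarrow> 'a \<Rightarrow> real) \<Rightarrow> 's \<Rightarrow> real"
  where "discounted_inflow \<gamma> T p0 \<rho> s' = (1 - \<gamma>) * p0 s' + \<gamma> * (\<Sum>s\<in>UNIV. \<Sum>a\<in>UNIV. \<rho> s a * T s a s')"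

lemma discounted_objective_eq:
  fixes T :: "'s::finite \<Rightarrow> 'a::finite \<Rightarrow> 's \<Rightarrow> real"
  shows "(1 - \<gamma>) * (\<Sum>s\<in>UNIV. p0 s * V s)
       - (\<Sum>s\<in>UNIV. \<Sum>a\<in>UNIV. \<rho> s a * (Q s a - \<gamma> * (\<Sum>s'\<in>UNIV. T s a s' * V s')))
     = (\<Sum>s\<in>UNIV. discounted_inflow \<gamma> T p0 \<rho> s * V s) - (\<Sum>s\<in>UNIV. \<Sum>a\<in>UNIV. \<rho> s a * Q s a)"
proof -
  have "discounted_inflow \<gamma> T p0 \<rho> s' * V s'
      = (1 - \<gamma>) * (p0 s' * V s') + \<gamma> * (\<Sum>s\<in>UNIV. \<Sum>a\<in>UNIV. \<rho> s a * T s a s' * V s')" for s'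
    by (simp add: discounted_inflow_def algebra_simps sum_distrib_left sum_distrib_right)
  then have "(\<Sum>s'\<in>UNIV. discounted_inflow \<gamma> T p0 \<rho> s' * V s')
      = (1 - \<gamma>) * (\<Sum>s\<in>UNIV. p0 s * V s)
        + \<gamma> * (\<Sum>s'\<in>UNIV. \<Sum>s\<in>UNIV. \<Sum>a\<in>UNIV. \<rho> s a * T s a s' * V s')"
    by (simp add: sum.distrib sum_distrib_left)
  also have "(\<Sum>s'\<in>UNIV. \<Sum>s\<in>UNIV. \<Sum>a\<in>UNIV. \<rho> s a * T s a s' * V s')
      = (\<Sum>s\<in>UNIV. \<Sum>a\<in>UNIV. \<Sum>s'\<in>UNIV. \<rho> s a * T s a s' * V s')"
    by (subst sum.swap, rule sum.cong, simp, rule sum.swap)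
  finally show ?thesis
    by (simp add: algebra_simps sum.distrib sum_distrib_left sum_distrib_right sum_subtractf)
qed

locale soft_mdp =
  fixes T :: "'s::finite \<Rightarrow> 'a::finite \<Rightarrow> 's \<Rightarrow> real"
    and p0 :: "'s \<Rightarrow> real"
    and \<gamma> \<beta> \<alpha> :: real
    and \<mu> dU \<Psi> :: "'s \<Rightarrow> 'a \<Rightarrow> real"
  assumes T_nonneg: "\<And>s a s'. 0 \<le> T s a s'"
    and p0_nonneg: "\<And>s. 0 \<le> p0 s"
    and gamma: "0 \<le> \<gamma>" "\<gamma> \<le> 1"
    and beta: "0 < \<beta>"
    and mu_pos: "\<And>s a. 0 < \<mu> s a"
    and mu_policy: "is_policy \<mu>"
    and dU_nonneg: "\<And>s a. 0 \<le> dU s a"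
begin

abbreviation L where "L \<equiv> L_minmax \<gamma> T p0 \<beta> \<alpha> \<mu> dU \<Psi>"

abbreviation L1 where "L1 \<equiv> L_single \<gamma> T p0 \<beta> \<alpha> \<mu> dU \<Psi>"

definition \<rho> :: "'s \<Rightarrow> 'a \<Rightarrow> real" where "\<rho> s a = dU s a * delta_w \<alpha> \<Psi> s a"

abbreviation w where "w \<equiv> discounted_inflow \<gamma> T p0 \<rho>"

definition L_const :: real where "L_const = (1 - \<alpha>) * (\<Sum>s\<in>UNIV. \<Sum>a\<in>UNIV. \<rho> s a)"

lemma rho_nonneg: "0 \<le> \<rho> s a"
  using dU_nonneg[of s a] by (simp add: \<rho>_def delta_w_def)

lemma inflow_nonneg: "0 \<le> w s"
  unfolding discounted_inflow_def using gamma p0_nonneg T_nonneg rho_nonneg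
  by (intro add_nonneg_nonneg mult_nonneg_nonneg sum_nonneg) auto

lemma L_eq: "L Q \<pi> = (\<Sum>s\<in>UNIV. w s * V_pi \<beta> \<mu> Q \<pi> s) - (\<Sum>s\<in>UNIV. \<Sum>a\<in>UNIV. \<rho> s a * Q s a) + L_const"
  unfolding L_minmax_def Bell_pi_def L_const_def discounted_objective_eq[symmetric]
  by (simp add: \<rho>_def mult.assoc)

lemma L1_eq: "L1 Q = (\<Sum>s\<in>UNIV. w s * V_soft \<beta> \<mu> Q s) - (\<Sum>s\<in>UNIV. \<Sum>a\<in>UNIV. \<rho> s a * Q s a)"
  unfolding L_single_def Bell_soft_def discounted_objective_eq[symmetric]
  by (simp add: \<rho>_def mult.assoc)

lemma L_affine_Q: "L (\<lambda>s a. t * Q1 s a + (1 - t) * Q2 s a) \<pi> = t * L Q1 \<pi> + (1 - t) * L Q2 \<pi>"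
  unfolding L_eq V_pi_affine_Q sum_sum_convex_comb unfolding sum_convex_comb
  by (simp add: algebra_simps)

lemma L_concave_policy:
  assumes "\<pi>1 \<in> policies" "\<pi>2 \<in> policies" "0 \<le> t" "t \<le> 1"
  shows "t * L Q \<pi>1 + (1 - t) * L Q \<pi>2 \<le> L Q (\<lambda>s a. t * \<pi>1 s a + (1 - t) * \<pi>2 s a)"
proof -
  have "(\<Sum>s\<in>UNIV. w s * (t * V_pi \<beta> \<mu> Q \<pi>1 s + (1 - t) * V_pi \<beta> \<mu> Q \<pi>2 s))
     \<le> (\<Sum>s\<in>UNIV. w s * V_pi \<beta> \<mu> Q (\<lambda>s a. t * \<pi>1 s a + (1 - t) * \<pi>2 s a) s)"
    using assms inflow_nonneg mu_pos beta
    by (intro sum_mono mult_left_mono V_pi_concave_policy) (auto simp: policies_def is_policy_def)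
  then show ?thesis unfolding L_eq sum_convex_comb by (simp add: algebra_simps)
qed

lemma L1_plus_const_minus_L:
  "L1 Q + L_const - L Q \<pi> = (\<Sum>s\<in>UNIV. w s * (V_soft \<beta> \<mu> Q s - V_pi \<beta> \<mu> Q \<pi> s))"
  unfolding L_eq L1_eq by (simp add: right_diff_distrib sum_subtractf)

lemma L_le_L1_plus_const:
  assumes "\<pi> \<in> policies"
  shows "L Q \<pi> \<le> L1 Q + L_const"
proof -
  have "0 \<le> (\<Sum>s\<in>UNIV. w s * (V_soft \<beta> \<mu> Q s - V_pi \<beta> \<mu> Q \<pi> s))"
    using assms inflow_nonneg mu_pos beta
    by (intro sum_nonneg mult_nonneg_nonneg) (auto simp: policies_def is_policy_def V_pi_le_V_soft)
  then show ?thesis unfolding L1_plus_const_minus_L[symmetric] by simp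
qed

lemma gibbs_policy_in_policies: "gibbs_policy \<beta> \<mu> Q \<in> policies"
  unfolding policies_def using is_policy_gibbs_policy mu_pos by blast

lemma L_gibbs_policy: "L Q (gibbs_policy \<beta> \<mu> Q) = L1 Q + L_const"
  using L1_plus_const_minus_L[of Q "gibbs_policy \<beta> \<mu> Q"] mu_pos beta
  by (simp add: V_pi_gibbs_policy)

lemma SUP_L_eq: "(SUP \<pi>\<in>policies. ereal (L Q \<pi>)) = ereal (L1 Q + L_const)"
proof (rule antisym)
  show "(SUP \<pi>\<in>policies. ereal (L Q \<pi>)) \<le> ereal (L1 Q + L_const)"
    by (rule SUP_least) (simp add: L_le_L1_plus_const)
  show "ereal (L1 Q + L_const) \<le> (SUP \<pi>\<in>policies. ereal (L Q \<pi>))"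
    using gibbs_policy_in_policies[of Q] by (rule SUP_upper2) (simp add: L_gibbs_policy)
qed

lemma L1_convex:
  assumes "0 \<le> t" "t \<le> 1"
  shows "L1 (\<lambda>s a. t * Q1 s a + (1 - t) * Q2 s a) \<le> t * L1 Q1 + (1 - t) * L1 Q2"
proof -
  have "(\<Sum>s\<in>UNIV. w s * V_soft \<beta> \<mu> (\<lambda>s a. t * Q1 s a + (1 - t) * Q2 s a) s)
     \<le> (\<Sum>s\<in>UNIV. w s * (t * V_soft \<beta> \<mu> Q1 s + (1 - t) * V_soft \<beta> \<mu> Q2 s))"
    using assms inflow_nonneg mu_pos beta by (intro sum_mono mult_left_mono V_soft_convex) auto
  then show ?thesis
    unfolding L1_eq sum_sum_convex_comb unfolding sum_convex_comb by (simp add: algebra_simps)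
qed

lemma L1_action_independent: "L1 (\<lambda>s a. g s) = (\<Sum>s\<in>UNIV. (w s - (\<Sum>a\<in>UNIV. \<rho> s a)) * g s)"
  using mu_policy beta
  by (simp add: L1_eq is_policy_def V_soft_action_independent sum_distrib_right left_diff_distrib
      sum_subtractf)

lemma INF_SUP_L_eq_MInf_if_not_flow:
  assumes "(\<Sum>a\<in>UNIV. \<rho> s0 a) \<noteq> w s0"
  shows "(INF Q. SUP \<pi>\<in>policies. ereal (L Q \<pi>)) = -\<infinity>"
proof -
  define f where "f s = w s - (\<Sum>a\<in>UNIV. \<rho> s a)" for s
  define D where "D = (\<Sum>s\<in>UNIV. f s * f s)"
  have "f s0 \<noteq> 0" using assms by (simp add: f_def)
  then have "0 < f s0 * f s0" by (metis not_real_square_gt_zero)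
  also have "\<dots> \<le> D" unfolding D_def by (rule member_le_sum) auto
  finally have "0 < D" .
  have L1_scaled: "L1 (\<lambda>s a. c * f s) = c * D" for c
    by (simp add: L1_action_independent D_def sum_distrib_left f_def[symmetric] mult_ac)
  show ?thesis unfolding SUP_L_eq
  proof (rule ereal_bot)
    fix B
    define c where "c = (B - L_const) / D - 1"
    have "L1 (\<lambda>s a. c * f s) + L_const = B - D"
      unfolding L1_scaled c_def using \<open>0 < D\<close> by (simp add: field_simps)
    then have "L1 (\<lambda>s a. c * f s) + L_const \<le> B"
      using \<open>0 < D\<close> by simp
    then show "(INF Q. ereal (L1 Q + L_const)) \<le> ereal B"
      by (intro INF_lower2[of "\<lambda>s a. c * f s"]) auto
  qed
qed

text \<open>Where w vanishes the choice is irrelevant: under the flow constraint so does \<rho>.\<close>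

definition data_policy :: "'s \<Rightarrow> 'a \<Rightarrow> real"
  where "data_policy s a = (if w s = 0 then \<mu> s a else \<rho> s a / w s)"

context
  assumes flow: "\<And>s. (\<Sum>a\<in>UNIV. \<rho> s a) = w s"
begin

lemma inflow_mult_data_policy: "w s * data_policy s a = \<rho> s a"
proof (cases "w s = 0")
  case True
  then have "(\<Sum>a\<in>UNIV. \<rho> s a) = 0" using flow by simp
  then have "\<rho> s a = 0" using rho_nonneg by (simp add: sum_nonneg_eq_0_iff)
  then show ?thesis using True by simp
qed (simp add: data_policy_def)

lemma data_policy_in_policies: "data_policy \<in> policies"
proof -
  have "0 \<le> data_policy s a" for s a
    using mu_pos[of s a] rho_nonneg[of s a] inflow_nonneg[of s]
    by (simp add: data_policy_def less_imp_le)
  moreover have "(\<Sum>a\<in>UNIV. data_policy s a) = 1" for s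
    using mu_policy flow[of s]
    by (cases "w s = 0") (simp_all add: data_policy_def is_policy_def sum_divide_distrib[symmetric])
  ultimately show ?thesis by (simp add: policies_def is_policy_def)
qed

lemma L_data_policy: "L Q data_policy = L (\<lambda>_ _. 0) data_policy"
proof -
  have "w s * (\<Sum>a\<in>UNIV. data_policy s a * Q s a) = (\<Sum>a\<in>UNIV. \<rho> s a * Q s a)" for s
    by (simp add: sum_distrib_left mult.assoc[symmetric] inflow_mult_data_policy)
  then show ?thesis
    by (simp add: L_eq V_pi_eq_expectation_plus_V_pi_zero[of _ _ Q] distrib_left sum.distrib)
qed

lemma INF_SUP_L_le_data_policy:
  "(INF Q. SUP \<pi>\<in>policies. ereal (L Q \<pi>)) \<le> ereal (L (\<lambda>_ _. 0) data_policy)"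
  unfolding SUP_L_eq
proof (rule ereal_le_epsilon2)
  fix e :: real
  assume "0 < e"
  define M where "M = \<beta> * CARD('a) * (\<Sum>s\<in>UNIV. w s)"
  define \<epsilon> where "\<epsilon> = e / (M + 1)"
  define Q where "Q = (\<lambda>s a. \<beta> * ln ((data_policy s a + \<epsilon>) / \<mu> s a))"
  have "0 \<le> M" using beta inflow_nonneg by (simp add: M_def sum_nonneg)
  then have "0 < \<epsilon>" "M * \<epsilon> \<le> e"
    using \<open>0 < e\<close> by (auto simp: \<epsilon>_def field_simps)
  have "L1 Q + L_const - L Q data_policy \<le> (\<Sum>s\<in>UNIV. w s * (\<beta> * \<epsilon> * CARD('a)))"
    unfolding L1_plus_const_minus_L
  proof (intro sum_mono mult_left_mono)
    fix s
    have "V_soft \<beta> \<mu> Q s \<le> V_pi \<beta> \<mu> Q data_policy s + \<beta> * \<epsilon> * CARD('a)"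
      unfolding Q_def using mu_pos beta \<open>0 < \<epsilon>\<close> data_policy_in_policies
      by (intro V_soft_log_ratio_le) (auto simp: policies_def is_policy_def)
    then show "V_soft \<beta> \<mu> Q s - V_pi \<beta> \<mu> Q data_policy s \<le> \<beta> * \<epsilon> * CARD('a)"
      by simp
  qed (rule inflow_nonneg)
  also have "\<dots> = M * \<epsilon>" by (simp add: M_def sum_distrib_left mult_ac)
  finally have "L1 Q + L_const \<le> L (\<lambda>_ _. 0) data_policy + e"
    using \<open>M * \<epsilon> \<le> e\<close> L_data_policy[of Q] by linarith
  then show "(INF Q. ereal (L1 Q + L_const)) \<le> ereal (L (\<lambda>_ _. 0) data_policy) + ereal e"
    by (intro INF_lower2[of Q]) auto
qed

end

lemma L_minimax: "(SUP \<pi>\<in>policies. INF Q. ereal (L Q \<pi>)) = (INF Q. SUP \<pi>\<in>policies. ereal (L Q \<pi>))"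
proof (rule antisym)
  show "(SUP \<pi>\<in>policies. INF Q. ereal (L Q \<pi>)) \<le> (INF Q. SUP \<pi>\<in>policies. ereal (L Q \<pi>))"
    by (rule SUP_INF_le_INF_SUP[where f = "\<lambda>\<pi> Q. ereal (L Q \<pi>)"])
  show "(INF Q. SUP \<pi>\<in>policies. ereal (L Q \<pi>)) \<le> (SUP \<pi>\<in>policies. INF Q. ereal (L Q \<pi>))"
  proof (cases "\<forall>s. (\<Sum>a\<in>UNIV. \<rho> s a) = w s")
    case True
    then have flow: "\<And>s. (\<Sum>a\<in>UNIV. \<rho> s a) = w s" by blast
    have "(INF Q. SUP \<pi>\<in>policies. ereal (L Q \<pi>)) \<le> ereal (L (\<lambda>_ _. 0) data_policy)"
      using flow by (rule INF_SUP_L_le_data_policy)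
    also have "\<dots> \<le> (SUP \<pi>\<in>policies. INF Q. ereal (L Q \<pi>))"
    proof (rule SUP_upper2[OF data_policy_in_policies[OF flow]], rule INF_greatest)
      fix Q
      show "ereal (L (\<lambda>_ _. 0) data_policy) \<le> ereal (L Q data_policy)"
        by (subst L_data_policy[OF flow, of Q]) (rule order_refl)
    qed
    finally show ?thesis .
  next
    case False
    then obtain s0 where "(\<Sum>a\<in>UNIV. \<rho> s0 a) \<noteq> w s0" by blast
    then have "(INF Q. SUP \<pi>\<in>policies. ereal (L Q \<pi>)) = -\<infinity>"
      by (rule INF_SUP_L_eq_MInf_if_not_flow)
    then show ?thesis by simp
  qed
qed

end

theorem proposition4p4:
  fixes T :: "'s::finite \<Rightarrow> 'a::finite \<Rightarrow> 's \<Rightarrow> real"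
    and p0 :: "'s \<Rightarrow> real"
    and \<gamma> \<beta> \<alpha> :: real
    and \<mu> :: "'s \<Rightarrow> 'a \<Rightarrow> real"
    and dU :: "'s \<Rightarrow> 'a \<Rightarrow> real"
    and \<Psi> :: "'s \<Rightarrow> 'a \<Rightarrow> real"
  defines "L \<equiv> L_minmax \<gamma> T p0 \<beta> \<alpha> \<mu> dU \<Psi>"
      and "L1 \<equiv> L_single \<gamma> T p0 \<beta> \<alpha> \<mu> dU \<Psi>"
  assumes T_nonneg: "\<And>s a s'. 0 \<le> T s a s'"
      and T_sum: "\<And>s a. (\<Sum>s'\<in>UNIV. T s a s') = 1"
      and p0_nonneg: "\<And>s. 0 \<le> p0 s"
      and p0_sum: "(\<Sum>s\<in>UNIV. p0 s) = 1"
      and gamma: "0 \<le> \<gamma>" "\<gamma> < 1"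
      and beta: "0 < \<beta>"
      and alpha: "0 \<le> \<alpha>" "\<alpha> < 1"
      and mu_pos: "\<And>s a. 0 < \<mu> s a"
      and mu_policy: "is_policy \<mu>"
      and dU_nonneg: "\<And>s a. 0 \<le> dU s a"
      and dU_sum: "(\<Sum>s\<in>UNIV. \<Sum>a\<in>UNIV. dU s a) = 1"
  shows
    \<comment> \<open>(i) affine ("linear") in Q\<close>
    "(\<forall>\<pi>\<in>policies. \<forall>Q1 Q2 t.
        L (\<lambda>s a. t * Q1 s a + (1 - t) * Q2 s a) \<pi> = t * L Q1 \<pi> + (1 - t) * L Q2 \<pi>)
     \<comment> \<open>(i) concave in pi over the convex set of policies\<close>
     \<and> (\<forall>Q. \<forall>\<pi>1\<in>policies. \<forall>\<pi>2\<in>policies. \<forall>t. 0 \<le> t \<and> t \<le> 1 \<longrightarrow>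
        t * L Q \<pi>1 + (1 - t) * L Q \<pi>2 \<le> L Q (\<lambda>s a. t * \<pi>1 s a + (1 - t) * \<pi>2 s a))
     \<comment> \<open>(i) minimax equality (extended reals: the min over Q may be -infinity)\<close>
     \<and> (SUP \<pi>\<in>policies. INF Q. ereal (L Q \<pi>)) = (INF Q. SUP \<pi>\<in>policies. ereal (L Q \<pi>))
     \<comment> \<open>(ii) for every Q, the max over pi exists and equals L1 Q + (1-alpha) E_dU[delta]\<close>
     \<and> (\<forall>Q. (\<forall>\<pi>\<in>policies. L Q \<pi> \<le> L1 Q + (1 - \<alpha>) * (\<Sum>s\<in>UNIV. \<Sum>a\<in>UNIV. dU s a * delta_w \<alpha> \<Psi> s a))
           \<and> (\<exists>\<pi>\<in>policies. L Q \<pi> = L1 Q + (1 - \<alpha>) * (\<Sum>s\<in>UNIV. \<Sum>a\<in>UNIV. dU s a * delta_w \<alpha> \<Psi> s a)))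
     \<comment> \<open>(ii) L1 convex in Q\<close>
     \<and> (\<forall>Q1 Q2 t. 0 \<le> t \<and> t \<le> 1 \<longrightarrow>
        L1 (\<lambda>s a. t * Q1 s a + (1 - t) * Q2 s a) \<le> t * L1 Q1 + (1 - t) * L1 Q2)"
proof -
  interpret mdp: soft_mdp T p0 \<gamma> \<beta> \<alpha> \<mu> dU \<Psi>
    using T_nonneg p0_nonneg gamma beta mu_pos mu_policy dU_nonneg by unfold_locales auto
  have const: "(1 - \<alpha>) * (\<Sum>s\<in>UNIV. \<Sum>a\<in>UNIV. dU s a * delta_w \<alpha> \<Psi> s a) = mdp.L_const"
    by (simp add: mdp.L_const_def mdp.\<rho>_def)
  have max_attained: "\<exists>\<pi>\<in>policies. mdp.L Q \<pi> = mdp.L1 Q + mdp.L_const" for Q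
    using mdp.L_gibbs_policy mdp.gibbs_policy_in_policies by blast
  show ?thesis
    unfolding L_def L1_def const
    by (intro conjI allI ballI impI mdp.L_affine_Q mdp.L_concave_policy mdp.L_minimax
        mdp.L_le_L1_plus_const mdp.L1_convex max_attained) auto
qed

end
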